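(* Let $E(z)=A(z)-iB(z)$ be a Hermite-Biehler function with no real zeros and suppose that $AB\notin \mathcal{H}(E^2)$. Let $\{s_n\}$ be the real zeros of $A(z)$ and, for every $n$, let $P_n(z)=\frac{A(z)^2}{(z-s_n)^2}$ and $Q_n(z)=\frac{A(z)^2}{(z-s_n)}$. Then, if $s_k\neq s_l$, we have \begin{equation*} \langle P_k,P_l \rangle_{E^2} = -\bigg( \frac{A'(s_k)}{B(s_k)} + \frac{A'(s_l)}{B(s_l)}\bigg)\frac{\pi}{2(s_k-s_l)^2} \end{equation*} and \begin{equation*} \langle Q_k,Q_l\rangle_{E^2} = 0. \end{equation*} We also have \begin{equation*} \|P_k\|^2_{E^2} = -\frac{\pi}{2}\bigg( \frac{A'(s_k)^3}{B(s_k)^3} + \frac{1}{6}\frac{\partial^3}{\partial z^3}\frac{A(z)}{B(z)}\bigg|_{z=s_k}\bigg) \end{equation*} and \begin{equation*} \|Q_k\|^2_{E^2} = -\frac{\pi}{2}\frac{A'(s_k)}{B(s_k)}. \end{equation*}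
   Context: A Hermite-Biehler function is an entire $E$ with $|E(\overline{z})|<|E(z)|$ for $\operatorname{Im} z>0$; its companion functions are the real entire functions $A(z)=\frac12\{E(z)+\overline{E(\overline{z})}\}$ and $B(z)=\frac{i}{2}\{E(z)-\overline{E(\overline{z})}\}$, so $E=A-iB$. The points $s_n$ (indexed by $n\in\mathbb{Z}$) are those real points where the phase $\varphi$ of $E$ (defined by $e^{i\varphi(x)}E(x)\in\mathbb{R}$) satisfies $\varphi(s_n)=\pi/2+n\pi$; since $E$ has no real zeros these are exactly the (simple) real zeros of $A$. $\mathcal{H}(E^2)$ denotes the de Branges space of entire functions $F$ such that $F/E^2$ and $\overline{F(\overline{z})}/E^2$ have bounded type in the upper half-plane with non-positive mean type and $\int_\mathbb{R}|F(x)/E(x)^2|^2\,dx<\infty$, with inner product $\langle F,G\rangle_{E^2}=\int_{\mathbb{R}} F(x)\overline{G(x)}\,|E(x)|^{-4}\,dx$ and norm $\|\cdot\|_{E^2}$. Note $P_n,Q_n\in\mathcal{H}(E^2)$ for all $n$. *)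

theory Defs
  imports "HOL-Analysis.Analysis"
begin

definition hermite_biehler :: "(complex \<Rightarrow> complex) \<Rightarrow> bool" where
  "hermite_biehler E \<longleftrightarrow> E holomorphic_on UNIV \<and>
     (\<forall>z. Im z > 0 \<longrightarrow> norm (E (cnj z)) < norm (E z))"

definition compA :: "(complex \<Rightarrow> complex) \<Rightarrow> complex \<Rightarrow> complex" where
  "compA E z = (E z + cnj (E (cnj z))) / 2"

definition compB :: "(complex \<Rightarrow> complex) \<Rightarrow> complex \<Rightarrow> complex" where
  "compB E z = (\<i> / 2) * (E z - cnj (E (cnj z)))"

definition UHP :: "complex set" where
  "UHP = {z. Im z > 0}"

definition bounded_type_UHP :: "(complex \<Rightarrow> complex) \<Rightarrow> bool" where
  "bounded_type_UHP f \<longleftrightarrow>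
     (\<exists>g h. g holomorphic_on UHP \<and> h holomorphic_on UHP \<and>
            bounded (g ` UHP) \<and> bounded (h ` UHP) \<and> (\<exists>z\<in>UHP. h z \<noteq> 0) \<and>
            (\<forall>z\<in>UHP. f z * h z = g z))"

definition log_norm :: "complex \<Rightarrow> ereal" where
  "log_norm w = (if w = 0 then -\<infinity> else ereal (ln (norm w)))"

definition mean_type :: "(complex \<Rightarrow> complex) \<Rightarrow> ereal" where
  "mean_type f = Limsup at_top (\<lambda>y::real. log_norm (f (\<i> * of_real y)) / ereal y)"

definition sharp :: "(complex \<Rightarrow> complex) \<Rightarrow> complex \<Rightarrow> complex" where
  "sharp F z = cnj (F (cnj z))"

definition in_H_E2 :: "(complex \<Rightarrow> complex) \<Rightarrow> (complex \<Rightarrow> complex) \<Rightarrow> bool" where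
  "in_H_E2 E F \<longleftrightarrow> F holomorphic_on UNIV \<and>
     bounded_type_UHP (\<lambda>z. F z / (E z)^2) \<and> mean_type (\<lambda>z. F z / (E z)^2) \<le> 0 \<and>
     bounded_type_UHP (\<lambda>z. sharp F z / (E z)^2) \<and> mean_type (\<lambda>z. sharp F z / (E z)^2) \<le> 0 \<and>
     integrable lborel (\<lambda>x::real. (norm (F (of_real x) / (E (of_real x))^2))^2)"

definition inner_E2 :: "(complex \<Rightarrow> complex) \<Rightarrow> (complex \<Rightarrow> complex) \<Rightarrow> (complex \<Rightarrow> complex) \<Rightarrow> complex" where
  "inner_E2 E F G = integral\<^sup>L lborel
     (\<lambda>x::real. F (of_real x) * cnj (G (of_real x)) / complex_of_real ((norm (E (of_real x)))^4))"

definition norm_E2 :: "(complex \<Rightarrow> complex) \<Rightarrow> (complex \<Rightarrow> complex) \<Rightarrow> real" where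
  "norm_E2 E F = sqrt (integral\<^sup>L lborel (\<lambda>x::real. (norm (F (of_real x)))^2 / (norm (E (of_real x)))^4))"

text \<open>The functions P_n and Q_n (entire; value at the removable singularity filled in).\<close>
definition Pfun :: "(complex \<Rightarrow> complex) \<Rightarrow> real \<Rightarrow> complex \<Rightarrow> complex" where
  "Pfun E s z = (if z = of_real s then (deriv (compA E) (of_real s))^2
                 else (compA E z)^2 / (z - of_real s)^2)"

definition Qfun :: "(complex \<Rightarrow> complex) \<Rightarrow> real \<Rightarrow> complex \<Rightarrow> complex" where
  "Qfun E s z = (if z = of_real s then 0 else (compA E z)^2 / (z - of_real s))"

end

theory Submission
  imports Defs "HOL-Complex_Analysis.Complex_Analysis" "HOL-Probability.Sinc_Integral"
begin

(*
  For real x, E + cnj E = 2A gives A^4/|E|^4 = Re W(x) with W = (w + w^2)/2, w = A/E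
  (hb_weight E below), and |W| <= 1 on the closed upper half-plane because |A| <= |E| there.
  Each integrand of the theorem is therefore Re (W/D) on the real line, where D is
  (z - s_k)(z - s_l), its square, (z - s_k)^2 or (z - s_k)^4. Since A vanishes at the s_n, W/D
  has at most a pole of low order at each root of D, with a principal part that is purely
  imaginary on the real line (its coefficients are i times real Taylor coefficients of A/B).
  Removing the principal parts and adding i c / (z + i), with c chosen to cancel their 1/z
  decay, leaves a function holomorphic near the closed upper half-plane and O(|z|^-2) there,
  whose integral over the real line vanishes by Cauchy's theorem on half discs. Taking real
  parts, the integral equals -c pi.
*)

section \<open>Quadratic decay in the upper half-plane\<close>

definition decays_quadratically :: "(complex \<Rightarrow> complex) \<Rightarrow> bool" where
  "decays_quadratically H \<longleftrightarrow>
     (\<exists>K. \<forall>\<^sub>F z in at_infinity. 0 \<le> Im z \<longrightarrow> norm (H z) \<le> K / (norm z)^2)"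

lemma decays_quadratically_cong:
  assumes "decays_quadratically H" "\<forall>\<^sub>F z in at_infinity. 0 \<le> Im z \<longrightarrow> G z = H z"
  shows "decays_quadratically G"
proof -
  obtain K where "\<forall>\<^sub>F z in at_infinity. 0 \<le> Im z \<longrightarrow> norm (H z) \<le> K / (norm z)^2"
    using assms(1) unfolding decays_quadratically_def by blast
  with assms(2) have "\<forall>\<^sub>F z in at_infinity. 0 \<le> Im z \<longrightarrow> norm (G z) \<le> K / (norm z)^2"
    by eventually_elim auto
  then show ?thesis unfolding decays_quadratically_def by blast
qed

lemma decays_quadratically_add:
  assumes "decays_quadratically G" "decays_quadratically H"
  shows "decays_quadratically (\<lambda>z. G z + H z)"
proof -
  obtain K L where "\<forall>\<^sub>F z in at_infinity. 0 \<le> Im z \<longrightarrow> norm (G z) \<le> K / (norm z)^2"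
    and "\<forall>\<^sub>F z in at_infinity. 0 \<le> Im z \<longrightarrow> norm (H z) \<le> L / (norm z)^2"
    using assms unfolding decays_quadratically_def by blast
  then have "\<forall>\<^sub>F z in at_infinity. 0 \<le> Im z \<longrightarrow> norm (G z + H z) \<le> (K + L) / (norm z)^2"
    by eventually_elim (auto simp: add_divide_distrib intro: norm_triangle_le add_mono)
  then show ?thesis unfolding decays_quadratically_def by blast
qed

lemma decays_quadratically_mult_bounded:
  assumes "\<And>z. 0 \<le> Im z \<Longrightarrow> norm (W z) \<le> M" "decays_quadratically H"
  shows "decays_quadratically (\<lambda>z. W z * H z)"
proof -
  obtain K where "\<forall>\<^sub>F z in at_infinity. 0 \<le> Im z \<longrightarrow> norm (H z) \<le> K / (norm z)^2"
    using assms(2) unfolding decays_quadratically_def by blast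
  then have "\<forall>\<^sub>F z in at_infinity. 0 \<le> Im z \<longrightarrow> norm (W z * H z) \<le> (M * K) / (norm z)^2"
  proof eventually_elim
    case (elim z)
    show ?case
    proof
      assume z: "0 \<le> Im z"
      have "norm (W z * H z) \<le> M * (K / (norm z)^2)"
        unfolding norm_mult using elim z assms(1)[OF z]
        by (intro mult_mono) (auto intro: order.trans[OF norm_ge_zero])
      then show "norm (W z * H z) \<le> (M * K) / (norm z)^2" by simp
    qed
  qed
  then show ?thesis unfolding decays_quadratically_def by blast
qed

lemma decays_quadratically_0: "decays_quadratically (\<lambda>z. 0)"
  unfolding decays_quadratically_def by (intro exI[of _ 0]) simp

lemma eventually_at_infinity_norm_le_twice_dist:
  "\<forall>\<^sub>F z in at_infinity. norm z \<le> 2 * norm (z - p) \<and> 1 \<le> norm (z - p) \<and> 1 \<le> norm z"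
  unfolding eventually_at_infinity
proof (intro exI allI impI)
  fix z :: 'a assume z: "2 * norm p + 2 \<le> norm z"
  moreover have "norm z - norm p \<le> norm (z - p)" by (rule norm_triangle_ineq2)
  ultimately show "norm z \<le> 2 * norm (z - p) \<and> 1 \<le> norm (z - p) \<and> 1 \<le> norm z"
    using norm_ge_zero[of p] by linarith
qed

lemma eventually_at_infinity_not_in:
  assumes "finite T"
  shows "\<forall>\<^sub>F z in at_infinity. z \<notin> T"
proof -
  obtain b where "\<And>z. z \<in> T \<Longrightarrow> norm z \<le> b"
    using finite_imp_bounded[OF assms] unfolding bounded_iff by blast
  then show ?thesis
    unfolding eventually_at_infinity by (intro exI[of _ "b + 1"]) force
qed

lemma decays_quadratically_inverse_powers:
  assumes "2 \<le> m + n"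
  shows "decays_quadratically (\<lambda>z. c / ((z - p)^m * (z - q)^n))"
proof -
  have "\<forall>\<^sub>F z in at_infinity. norm (c / ((z - p)^m * (z - q)^n)) \<le> (4 * norm c) / (norm z)^2"
    using eventually_at_infinity_norm_le_twice_dist[of p] eventually_at_infinity_norm_le_twice_dist[of q]
  proof eventually_elim
    case (elim z)
    define t where "t = min (norm (z - p)) (norm (z - q))"
    have t: "1 \<le> t" "norm z \<le> 2 * t" using elim by (auto simp: t_def)
    have "t^2 \<le> t^(m + n)" using t(1) assms by (intro power_increasing) auto
    also have "\<dots> \<le> norm (z - p)^m * norm (z - q)^n"
      unfolding power_add using t(1) by (intro mult_mono power_mono) (auto simp: t_def)
    finally have "(norm z)^2 / 4 \<le> norm ((z - p)^m * (z - q)^n)"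
      using power_mono[OF t(2), of 2] t(1) by (simp add: norm_mult norm_power power_mult_distrib)
    moreover have "0 < (norm z)^2 / 4" using elim by (simp add: zero_less_norm_iff[symmetric] del: zero_less_norm_iff)
    ultimately have "norm c / norm ((z - p)^m * (z - q)^n) \<le> norm c / ((norm z)^2 / 4)"
      by (meson divide_left_mono mult_pos_pos norm_ge_zero order.strict_trans2)
    then show ?case by (simp add: norm_divide mult.commute)
  qed
  then show ?thesis unfolding decays_quadratically_def by (auto elim: eventually_mono)
qed

lemma decays_quadratically_inverse_diff:
  "decays_quadratically (\<lambda>z. c / (z - p) - c / (z - q))"
proof (rule decays_quadratically_cong)
  show "decays_quadratically (\<lambda>z. c * (p - q) / ((z - p)^1 * (z - q)^1))"
    by (rule decays_quadratically_inverse_powers) simp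
  show "\<forall>\<^sub>F z in at_infinity. 0 \<le> Im z \<longrightarrow>
          c / (z - p) - c / (z - q) = c * (p - q) / ((z - p)^1 * (z - q)^1)"
    using eventually_at_infinity_norm_le_twice_dist[of p] eventually_at_infinity_norm_le_twice_dist[of q]
  proof eventually_elim
    case (elim z)
    then have "z - p \<noteq> 0" "z - q \<noteq> 0" by auto
    then show ?case by (simp add: field_simps)
  qed
qed

section \<open>Real-line integrals by Cauchy's theorem\<close>

lemma integrable_inverse_1_plus_square_lborel:
  "integrable lborel (\<lambda>x::real. inverse (1 + x^2))"
  using integrable_inverse_1_plus_square by (simp add: set_integrable_def einterval_eq_UNIV)

lemma integral_inverse_1_plus_square_lborel:
  "integral\<^sup>L lborel (\<lambda>x::real. inverse (1 + x^2)) = pi"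
  using LBINT_inverse_1_plus_square
  by (simp add: interval_lebesgue_integral_def set_lebesgue_integral_def einterval_eq_UNIV)

lemma decays_quadratically_real_line_bound:
  assumes cont: "continuous_on UNIV (\<lambda>x::real. H (of_real x))"
    and decay: "decays_quadratically H"
  obtains C where "\<And>x::real. norm (H (of_real x)) \<le> C * inverse (1 + x^2)"
proof -
  obtain K b where Kb: "\<And>z. b \<le> norm z \<Longrightarrow> 0 \<le> Im z \<Longrightarrow> norm (H z) \<le> K / (norm z)^2"
    using decay unfolding decays_quadratically_def eventually_at_infinity by blast
  define R where "R = max b 1"
  have "bounded ((\<lambda>x::real. H (of_real x)) ` {-R..R})"
    by (intro compact_imp_bounded compact_continuous_image continuous_on_subset[OF cont]) auto
  then obtain M where M: "\<And>x. x \<in> {-R..R} \<Longrightarrow> norm (H (of_real x)) \<le> M"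
    unfolding bounded_iff by blast
  define C where "C = max (M * (1 + R^2)) (2 * K)"
  have "norm (H (of_real x)) \<le> C * inverse (1 + x^2)" for x
  proof (cases "\<bar>x\<bar> \<le> R")
    case True
    then have x: "x \<in> {-R..R}" by auto
    have "x^2 \<le> R^2"
      using True abs_le_square_iff[of x R] by (simp add: R_def)
    moreover have "0 \<le> M"
      using M[OF x] norm_ge_zero order.trans by blast
    ultimately have "norm (H (of_real x)) * (1 + x^2) \<le> M * (1 + R^2)"
      using M[OF x] by (intro mult_mono) auto
    then have "norm (H (of_real x)) \<le> M * (1 + R^2) * inverse (1 + x^2)"
      by (simp add: field_simps add_pos_nonneg)
    also have "\<dots> \<le> C * inverse (1 + x^2)"
      by (intro mult_right_mono) (auto simp: C_def)
    finally show ?thesis .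
  next
    case False
    then have x: "1 \<le> x^2" "b \<le> \<bar>x\<bar>"
      using abs_le_square_iff[of 1 x] by (auto simp: R_def)
    have bound: "norm (H (of_real x)) \<le> K / x^2"
      using Kb[of "of_real x"] x by simp
    then have "0 \<le> K / x^2" using norm_ge_zero order.trans by blast
    then have "0 \<le> K" using x by (auto simp: zero_le_divide_iff)
    have "K * (1 + x^2) \<le> (2 * K) * x^2"
      using mult_left_mono[of "1 + x^2" "2 * x^2" K] x \<open>0 \<le> K\<close> by (simp add: algebra_simps)
    moreover have "0 < x^2" "0 < 1 + x^2" using x by auto
    ultimately have "K / x^2 \<le> 2 * K / (1 + x^2)"
      by (simp add: divide_le_eq le_divide_eq mult.commute mult.left_commute)
    also have "\<dots> \<le> C * inverse (1 + x^2)"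
      by (simp add: C_def divide_inverse mult_right_mono add_pos_nonneg)
    finally show ?thesis using bound by linarith
  qed
  then show ?thesis using that by blast
qed

lemma path_image_upper_semicircle:
  "0 \<le> R \<Longrightarrow> path_image (part_circlepath 0 R 0 pi) \<subseteq> {z. 0 \<le> Im z}"
  by (auto simp: path_image_part_circlepath Im_exp intro!: mult_nonneg_nonneg sin_ge_zero)

lemma upper_semicircle_integral_tendsto_0:
  assumes cont: "continuous_on {z. 0 \<le> Im z} H" and decay: "decays_quadratically H"
  shows "((\<lambda>R. contour_integral (part_circlepath 0 R 0 pi) H) \<longlongrightarrow> 0) at_top"
proof -
  obtain K b where Kb: "\<And>z. b \<le> norm z \<Longrightarrow> 0 \<le> Im z \<Longrightarrow> norm (H z) \<le> K / (norm z)^2"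
    using decay unfolding decays_quadratically_def eventually_at_infinity by blast
  have bound: "\<forall>\<^sub>F R in at_top. norm (contour_integral (part_circlepath 0 R 0 pi) H) \<le> K * pi / R"
    using eventually_ge_at_top[of "max b 1"]
  proof eventually_elim
    case (elim R)
    have on_arc: "norm x = R \<and> 0 \<le> Im x" if "x \<in> path_image (part_circlepath 0 R 0 pi)" for x
      using path_image_upper_semicircle[of R] in_path_image_part_circlepath[OF that] elim that by auto
    have "norm (H (of_real R * \<i>)) \<le> K / R^2"
      using Kb[of "of_real R * \<i>"] elim by (simp add: norm_mult)
    then have "0 \<le> K / R^2"
      using norm_ge_zero order.trans by blast
    have "H contour_integrable_on part_circlepath 0 R 0 pi"
      using path_image_upper_semicircle[of R] elim
      by (intro contour_integrable_continuous_part_circlepath continuous_on_subset[OF cont]) auto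
    then have "norm (contour_integral (part_circlepath 0 R 0 pi) H) \<le> K / R^2 * R * (pi - 0)"
      using \<open>0 \<le> K / R^2\<close> elim on_arc Kb
      by (intro has_contour_integral_bound_part_circlepath) (auto intro: has_contour_integral_integral)
    also have "\<dots> = K * pi / R" using elim by (simp add: power2_eq_square)
    finally show ?case .
  qed
  have "((\<lambda>R. K * pi / R) \<longlongrightarrow> 0) at_top"
    by (rule tendsto_divide_0[OF tendsto_const filterlim_at_top_imp_at_infinity[OF filterlim_ident]])
  then have "((\<lambda>R. norm (contour_integral (part_circlepath 0 R 0 pi) H)) \<longlongrightarrow> 0) at_top"
    by (rule tendsto_sandwich[OF always_eventually[OF allI[OF norm_ge_zero]] bound tendsto_const])
  then show ?thesis by (rule tendsto_norm_zero_cancel)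
qed

lemma has_integral_real_segment_eq_semicircle:
  assumes U: "open U" "{z. 0 \<le> Im z} \<subseteq> U" and holo: "H holomorphic_on U" and R: "0 < R"
  shows "((\<lambda>x. H (of_real x)) has_integral - contour_integral (part_circlepath 0 R 0 pi) H) {-R..R}"
proof -
  define seg where "seg = linepath (of_real (-R)) (of_real R :: complex)"
  define arc where "arc = part_circlepath 0 R 0 pi"
  have contU: "continuous_on U H" using holo holomorphic_on_imp_continuous_on by blast
  have im_arc: "path_image arc \<subseteq> {z. 0 \<le> Im z}"
    unfolding arc_def using R by (intro path_image_upper_semicircle) simp
  have im_seg: "path_image seg \<subseteq> {z. 0 \<le> Im z}"
    by (auto simp: seg_def closed_segment_def scaleR_conv_of_real)
  have int_arc: "(H has_contour_integral contour_integral arc H) arc"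
    using im_arc U unfolding arc_def
    by (intro has_contour_integral_integral contour_integrable_continuous_part_circlepath
        continuous_on_subset[OF contU]) auto
  have int_seg: "(H has_contour_integral contour_integral seg H) seg"
    using im_seg U unfolding seg_def
    by (intro has_contour_integral_integral contour_integrable_continuous_linepath
        continuous_on_subset[OF contU]) auto
  have "(H has_contour_integral 0) (seg +++ arc)"
  proof (rule Cauchy_theorem_global[OF U(1) holo])
    show "valid_path (seg +++ arc)" "pathfinish (seg +++ arc) = pathstart (seg +++ arc)"
      by (auto simp: seg_def arc_def)
    have im: "path_image (seg +++ arc) \<subseteq> {z. 0 \<le> Im z}"
      by (subst path_image_join) (use im_arc im_seg in \<open>auto simp: seg_def arc_def\<close>)
    then show "path_image (seg +++ arc) \<subseteq> U" using U by auto
    show "winding_number (seg +++ arc) w = 0" if "w \<notin> U" for w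
      using that U
      by (intro winding_number_zero_outside[OF _ convex_halfspace_Im_ge _ _ im])
         (auto simp: seg_def arc_def)
  qed
  moreover have "(H has_contour_integral (contour_integral seg H + contour_integral arc H)) (seg +++ arc)"
    using int_seg int_arc by (rule has_contour_integral_join) (auto simp: seg_def arc_def)
  ultimately have "contour_integral seg H = - contour_integral arc H"
    using has_contour_integral_unique by (simp add: eq_neg_iff_add_eq_0)
  then show ?thesis
    using int_seg has_contour_integral_linepath_Reals_iff[of "of_real (-R)" "of_real R" H] R
    by (simp add: seg_def arc_def)
qed

lemma integrable_real_line_decaying:
  assumes cont: "continuous_on {z. 0 \<le> Im z} H" and decay: "decays_quadratically H"
  shows "integrable lborel (\<lambda>x. H (of_real x))"
proof -
  have cont_real: "continuous_on UNIV (\<lambda>x::real. H (of_real x))"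
    by (rule continuous_on_compose2[OF cont]) (auto intro!: continuous_intros)
  then have meas: "(\<lambda>x::real. H (of_real x)) \<in> borel_measurable lborel"
    using borel_measurable_continuous_onI by simp
  obtain C where C: "\<And>x::real. norm (H (of_real x)) \<le> C * inverse (1 + x^2)"
    using decays_quadratically_real_line_bound[OF cont_real decay] by blast
  show ?thesis
  proof (rule Bochner_Integration.integrable_bound[OF _ meas])
    show "integrable lborel (\<lambda>x::real. C * inverse (1 + x^2))"
      using integrable_inverse_1_plus_square_lborel by simp
    show "AE x in lborel. norm (H (of_real x)) \<le> norm (C * inverse (1 + x^2))"
      using C by (auto intro: order.trans[OF _ abs_ge_self])
  qed
qed

lemma integral_real_line_decaying:
  assumes U: "open U" "{z. 0 \<le> Im z} \<subseteq> U" and holo: "H holomorphic_on U"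
    and decay: "decays_quadratically H"
  shows "integral\<^sup>L lborel (\<lambda>x. H (of_real x)) = 0"
proof -
  define g where "g = (\<lambda>x::real. H (of_real x))"
  define I where "I R = integral\<^sup>L lborel (\<lambda>x. indicator {-R..R} x *\<^sub>R g x)" for R
  have cont: "continuous_on {z. 0 \<le> Im z} H"
    using holomorphic_on_imp_continuous_on[OF holo] U(2) by (rule continuous_on_subset)
  then have int: "integrable lborel g"
    unfolding g_def using decay by (rule integrable_real_line_decaying)
  have "(I \<longlongrightarrow> integral\<^sup>L lborel g) at_top"
    unfolding I_def
  proof (rule integral_dominated_convergence_at_top[where w="\<lambda>x. norm (g x)"])
    show "AE x in lborel. ((\<lambda>R. indicator {-R..R} x *\<^sub>R g x) \<longlongrightarrow> g x) at_top"
    proof (rule AE_I2)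
      fix x :: real
      have "\<forall>\<^sub>F R in at_top. indicator {-R..R} x *\<^sub>R g x = g x"
        using eventually_ge_at_top[of "\<bar>x\<bar>"] by eventually_elim (auto simp: indicator_def)
      then show "((\<lambda>R. indicator {-R..R} x *\<^sub>R g x) \<longlongrightarrow> g x) at_top"
        by (rule tendsto_eventually)
    qed
  qed (use int in \<open>auto simp: indicator_def\<close>)
  moreover have "\<forall>\<^sub>F R in at_top. - contour_integral (part_circlepath 0 R 0 pi) H = I R"
    using eventually_gt_at_top[of 0]
  proof eventually_elim
    case (elim R)
    have "set_integrable lborel {-R..R} g"
      unfolding set_integrable_def using int by (intro integrable_mult_indicator) auto
    then have "I R = integral {-R..R} g"
      unfolding I_def using set_borel_integral_eq_integral(2) by (simp add: set_lebesgue_integral_def)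
    also have "\<dots> = - contour_integral (part_circlepath 0 R 0 pi) H"
      using has_integral_real_segment_eq_semicircle[OF U holo elim] unfolding g_def
      by (rule integral_unique)
    finally show ?case by simp
  qed
  then have "(I \<longlongrightarrow> - 0) at_top"
    by (rule Lim_transform_eventually[OF tendsto_minus[OF upper_semicircle_integral_tendsto_0[OF cont decay]]])
  ultimately show ?thesis
    using tendsto_unique[OF trivial_limit_at_top_linorder] by (fastforce simp: g_def)
qed

lemma real_part_i_div_add_i:
  fixes c :: complex and x :: real
  assumes "cnj c = c"
  shows "(\<i> * c / (of_real x + \<i>) + cnj (\<i> * c / (of_real x + \<i>))) / 2
         = c * of_real (inverse (1 + x^2))"
proof -
  have "(of_real x + \<i>) * (of_real x - \<i>) = complex_of_real (1 + x^2)"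
    by (simp add: algebra_simps power2_eq_square)
  moreover have "0 < 1 + x^2" by (simp add: add_pos_nonneg)
  then have "of_real x + \<i> \<noteq> 0" "of_real x - \<i> \<noteq> 0" "complex_of_real (1 + x^2) \<noteq> 0"
    by (auto simp: complex_eq_iff simp del: of_real_add of_real_power)
  moreover have "(2::complex) + of_real x * (of_real x * 2) = 2 * complex_of_real (1 + x^2)"
    by (simp add: algebra_simps power2_eq_square)
  then have "(2::complex) + of_real x * (of_real x * 2) \<noteq> 0"
    using \<open>complex_of_real (1 + x^2) \<noteq> 0\<close> by (metis mult_eq_0_iff zero_neq_numeral)
  ultimately show ?thesis
    using assms by (simp add: field_simps power2_eq_square)
qed

text \<open>The term \<open>\<i> c / (z + \<i>)\<close>, whose real part on the real line is \<open>c / (1 + x\<^sup>2)\<close>,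
  is added in the applications to cancel the \<open>1/z\<close> decay of principal parts.\<close>

lemma integral_eq_of_decaying_real_part:
  assumes U: "open U" "{z. 0 \<le> Im z} \<subseteq> U" and holo: "H holomorphic_on U"
    and decay: "decays_quadratically H"
    and F: "F \<in> borel_measurable lborel" and S: "finite S"
    and FH: "\<And>x. x \<notin> S \<Longrightarrow>
               F x = (H (of_real x) + cnj (H (of_real x))) / 2 - c * of_real (inverse (1 + x^2))"
  shows "integral\<^sup>L lborel F = - c * pi"
proof -
  have "continuous_on {z. 0 \<le> Im z} H"
    using holomorphic_on_imp_continuous_on[OF holo] U(2) by (rule continuous_on_subset)
  note intH = integrable_real_line_decaying[OF this decay]
  define R where "R = (\<lambda>x::real. (H (of_real x) + cnj (H (of_real x))) / 2 - c * of_real (inverse (1 + x^2)))"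
  have int_inv: "integrable lborel (\<lambda>x::real. complex_of_real (inverse (1 + x^2)))"
    by (rule integrable_bounded_linear[OF bounded_linear_of_real integrable_inverse_1_plus_square_lborel])
  have int_cnj: "integrable lborel (\<lambda>x. cnj (H (of_real x)))"
    by (rule integrable_bounded_linear[OF bounded_linear_cnj intH])
  have "integral\<^sup>L lborel (\<lambda>x::real. complex_of_real (inverse (1 + x^2))) = of_real pi"
    by (simp only: integral_complex_of_real integral_inverse_1_plus_square_lborel)
  then have "integral\<^sup>L lborel R = - c * pi"
    unfolding R_def using intH int_cnj int_inv integral_real_line_decaying[OF U holo decay]
    by (simp add: Bochner_Integration.integral_diff Bochner_Integration.integral_add)
  moreover have "AE x in lborel. F x = R x"
    using AE_not_in[OF finite_imp_null_set_lborel[OF S]] by eventually_elim (simp add: FH R_def)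
  moreover have "integrable lborel R"
    unfolding R_def using intH int_cnj int_inv
    by (intro Bochner_Integration.integrable_diff Bochner_Integration.integrable_divide
        Bochner_Integration.integrable_add Bochner_Integration.integrable_mult_right)
  ultimately show ?thesis
    using integral_cong_AE[OF F borel_measurable_integrable] by metis
qed

section \<open>Divided differences\<close>

definition divided_diff :: "(complex \<Rightarrow> complex) \<Rightarrow> complex \<Rightarrow> complex \<Rightarrow> complex" where
  "divided_diff f a z = (if z = a then deriv f a else (f z - f a) / (z - a))"

lemma holomorphic_on_divided_diff:
  "f holomorphic_on S \<Longrightarrow> open S \<Longrightarrow> divided_diff f a holomorphic_on S"
  unfolding divided_diff_def using pole_lemma_open by blast

lemma divided_diff_expansion: "f z = f a + (z - a) * divided_diff f a z"
  by (simp add: divided_diff_def)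

lemma divided_diff_same [simp]: "divided_diff f a a = deriv f a"
  by (simp add: divided_diff_def)

lemma divided_diff_other: "z \<noteq> a \<Longrightarrow> divided_diff f a z = (f z - f a) / (z - a)"
  by (simp add: divided_diff_def)

lemma deriv_of_real_in_Reals:
  fixes f :: "complex \<Rightarrow> complex"
  assumes d: "f field_differentiable at (of_real s)" and r: "\<And>x::real. f (of_real x) \<in> \<real>"
  shows "deriv f (of_real s) \<in> \<real>"
proof -
  have "(\<lambda>h. (f (of_real s + h) - f (of_real s)) / h) \<midarrow>0\<rightarrow> deriv f (of_real s)"
    using d DERIV_deriv_iff_field_differentiable by (auto simp: DERIV_def)
  then have "((\<lambda>r::real. (f (of_real s + of_real r) - f (of_real s)) / of_real r)
               \<longlongrightarrow> deriv f (of_real s)) (at 0)"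
    by (rule tendsto_compose_eventually) (auto intro!: tendsto_eq_intros simp: eventually_at_filter)
  moreover have "\<forall>\<^sub>F r::real in at 0. (f (of_real s + of_real r) - f (of_real s)) / of_real r \<in> \<real>"
    using r by (intro always_eventually allI) (metis Reals_diff Reals_divide Reals_of_real of_real_add)
  ultimately show ?thesis
    by (intro Lim_in_closed_set[OF closed_complex_Reals]) auto
qed

lemma divided_diff_of_real_in_Reals:
  assumes "f field_differentiable at (of_real s)" "\<And>x::real. f (of_real x) \<in> \<real>"
  shows "divided_diff f (of_real s) (of_real x) \<in> \<real>"
  using deriv_of_real_in_Reals[OF assms] assms(2)
  by (auto simp: divided_diff_def intro!: Reals_divide Reals_diff)

lemma deriv_divide_at_zero:
  fixes f g :: "complex \<Rightarrow> complex"
  assumes "f field_differentiable at z" "g field_differentiable at z" "f z = 0" "g z \<noteq> 0"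
  shows "deriv (\<lambda>w. f w / g w) z = deriv f z / g z"
proof -
  have "DERIV (\<lambda>w. f w / g w) z :> (deriv f z * g z - f z * deriv g z) / (g z * g z)"
    using assms by (intro DERIV_divide) (auto simp: DERIV_deriv_iff_field_differentiable)
  then have "deriv (\<lambda>w. f w / g w) z = (deriv f z * g z - f z * deriv g z) / (g z * g z)"
    by (rule DERIV_imp_deriv)
  also have "\<dots> = deriv f z / g z"
    using assms(3,4) by simp
  finally show ?thesis .
qed

lemma higher_deriv_diff_const:
  fixes s :: complex
  shows "(deriv ^^ n) (\<lambda>z. z - s) s = (if n = 1 then 1 else 0)"
proof (cases n)
  case (Suc m)
  have "deriv (\<lambda>z. z - s) = (\<lambda>z. 1)"
    by (rule ext, rule DERIV_imp_deriv) (auto intro!: derivative_eq_intros)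
  then show ?thesis
    using Suc by (simp only: funpow_Suc_right o_def) simp
qed simp

lemma third_deriv_eq_divided_diff:
  assumes V: "open V" "s \<in> V" and f: "f holomorphic_on V" "f s = 0"
  shows "(deriv ^^ 3) f s = 6 * divided_diff (divided_diff (divided_diff f s) s) s s"
proof -
  define u1 where "u1 = divided_diff f s"
  define u2 where "u2 = divided_diff u1 s"
  have hol: "u1 holomorphic_on V" "u2 holomorphic_on V" "(\<lambda>z. z - s) holomorphic_on V"
    unfolding u1_def u2_def using f V by (auto intro!: holomorphic_on_divided_diff holomorphic_intros)
  have "f = (\<lambda>z. (z - s) * u1 z)"
    unfolding u1_def by (intro ext) (metis add_0 divided_diff_expansion f(2))
  then have "(deriv ^^ 3) f s = 3 * (deriv ^^ 2) u1 s"
    using higher_deriv_mult[OF hol(3,1) V, of 3] by (simp add: higher_deriv_diff_const eval_nat_numeral)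
  also have "(deriv ^^ 2) u1 s = (deriv ^^ 2) (\<lambda>z. (z - s) * u2 z) s"
  proof -
    define a where "a = u1 s"
    have "u1 = (\<lambda>z. a + (z - s) * u2 z)"
      unfolding u2_def a_def by (intro ext divided_diff_expansion)
    then have "(deriv ^^ 2) u1 s = (deriv ^^ 2) (\<lambda>z. a) s + (deriv ^^ 2) (\<lambda>z. (z - s) * u2 z) s"
      using hol V by (simp only:) (rule higher_deriv_add, auto intro!: holomorphic_intros)
    then show ?thesis by (simp add: eval_nat_numeral)
  qed
  also have "\<dots> = 2 * deriv u2 s"
    using higher_deriv_mult[OF hol(3,2) V, of 2] by (simp add: higher_deriv_diff_const eval_nat_numeral)
  finally show ?thesis by (simp add: u1_def u2_def)
qed

lemma holomorphic_on_remove_singularity: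
  assumes U: "open U" and f: "f holomorphic_on U - {s}" and V: "open V" "s \<in> V"
    and g: "isCont g s" and fg: "\<And>z. z \<in> V \<Longrightarrow> z \<noteq> s \<Longrightarrow> f z = g z"
  shows "(\<lambda>z. if z = s then g s else f z) holomorphic_on U"
proof (rule removable_singularity[OF f U])
  have "\<forall>\<^sub>F z in at s. g z = f z"
    using eventually_at_in_open[OF V] by eventually_elim (simp add: fg)
  then show "f \<midarrow>s\<rightarrow> g s"
    using g unfolding isCont_def by (rule Lim_transform_eventually[rotated])
qed

lemma quotients_plus_squares_sum:
  fixes a e e' :: complex
  assumes "e \<noteq> 0" "e' \<noteq> 0" "e + e' = 2 * a"
  shows "(a/e + (a/e)^2 + (a/e' + (a/e')^2)) / 4 = a^4 / (e * e')^2"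
proof -
  have e': "e' = 2 * a - e" using assms(3) by (simp add: algebra_simps)
  show ?thesis
    using assms(1,2) unfolding e'
    by (simp add: field_simps) (simp add: algebra_simps power2_eq_square power4_eq_xxxx)
qed

lemma real_part_quotient_plus_square:
  fixes a e :: complex
  assumes e: "e \<noteq> 0" and a: "cnj a = a" and ea: "e + cnj e = 2 * a"
  shows "((a/e + (a/e)^2)/2 + cnj ((a/e + (a/e)^2)/2)) / 2 = a^4 / (e * cnj e)^2"
proof -
  have cnj_eq: "cnj ((a/e + (a/e)^2)/2) = (a/cnj e + (a/cnj e)^2)/2"
    using a by simp
  have "\<And>u v :: complex. (u/2 + v/2)/2 = (u + v)/4" by simp
  then have "((a/e + (a/e)^2)/2 + cnj ((a/e + (a/e)^2)/2)) / 2
             = (a/e + (a/e)^2 + (a/cnj e + (a/cnj e)^2)) / 4"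
    unfolding cnj_eq by (simp only:)
  also have "\<dots> = a^4 / (e * cnj e)^2"
    using e ea by (intro quotients_plus_squares_sum) auto
  finally show ?thesis .
qed

lemma real_part_weight_sum:
  fixes w d p j :: complex
  assumes "cnj d = d"
  shows "((w * (1/d) + (p + j)) + cnj (w * (1/d) + (p + j))) / 2
         = (w + cnj w) / 2 / d + (p + cnj p) / 2 + (j + cnj j) / 2"
proof -
  have "cnj (w * (1/d)) = cnj w * (1/d)" using assms by simp
  then show ?thesis using assms by (simp add: add_divide_distrib ring_distribs mult.commute)
qed

lemma complex_of_real_norm_square_div:
  "complex_of_real (norm q ^ 2 / r) = q * cnj q / complex_of_real r"
  by (simp only: of_real_divide complex_norm_square)

lemma partial_fractions_two_simple_poles:
  fixes u tk tl :: complex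
  assumes "tk \<noteq> 0" "tl \<noteq> 0" "tl - tk \<noteq> 0"
  shows "((u/tk - u/tl)/(tl - tk) + (u/tk)*(u/tl))/2 = (u + u^2)/2 * (1/(tk^1 * tl^1))"
  using assms by (simp add: field_simps) (simp add: algebra_simps power2_eq_square)

lemma partial_fractions_double_pole:
  fixes u t a J :: complex
  assumes "t \<noteq> 0"
  shows "((u/t - \<i>*a)/t)/2 + (u/t)^2/2 + J = (u + u^2)/2 * (1/t^2) + (- (\<i>*a/2)/t + J)"
  using assms by (simp add: field_simps power2_eq_square)

lemma partial_fractions_two_double_poles:
  fixes u tk tl ak al :: complex
  assumes tk: "tk \<noteq> 0" and tl: "tl \<noteq> 0" and d: "tl - tk \<noteq> 0"
  shows "((((u/tk) - \<i>*ak)/tk + ((u/tl) - \<i>*al)/tl)/(tl - tk)^2 - 2*((u/tk) - (u/tl))/(tl - tk)^3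
           + ((u/tk - u/tl)/(tl - tk))^2)/2
       = (u + u^2)/2 * (1/(tk^2 * tl^2)) + (- (\<i>*ak/(2*(tl - tk)^2))/tk - (\<i>*al/(2*(tl - tk)^2))/tl)"
proof -
  define p q where "p = 1/tk" and "q = 1/tl"
  define e where "e = tl - tk"
  have e: "e \<noteq> 0" using d by (simp add: e_def)
  have pq: "p - q = e*p*q" using tk tl unfolding p_def q_def e_def by (simp add: field_simps)
  have quot: "u/tk = u*p" "u/tl = u*q" "x/tk = x*p" "x/tl = x*q" for x
    unfolding p_def q_def by simp_all
  have diff: "u*p - u*q = u*(e*p*q)" using pq by (metis right_diff_distrib)
  have "(p - q)*(p - q) = (e*p*q)*(e*p*q)" using pq by simp
  then have "p*p + q*q - 2*p*q = e*e*p*p*q*q"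
    by (simp add: algebra_simps)
  from arg_cong[where f="\<lambda>x. u*x", OF this]
  have sq: "u*(p*p) + u*(q*q) - 2*u*p*q = u*(e*e*p*p*q*q)"
    by (simp add: algebra_simps)
  have "((u*p - \<i>*ak)*p + (u*q - \<i>*al)*q)/e^2 - 2*(u*p - u*q)/e^3 + ((u*p - u*q)/e)^2
      = ((u*p - \<i>*ak)*p + (u*q - \<i>*al)*q - 2*u*p*q)/e^2 + (u*(e*p*q)/e)^2"
    unfolding diff using d by (simp add: e_def diff_divide_distrib eval_nat_numeral)
  also have "\<dots> = (u*(e*e*p*p*q*q) - \<i>*(ak*p + al*q))/e^2 + (u*(e*p*q)/e)^2"
    using sq by (simp add: algebra_simps)
  also have "\<dots> = (u + u^2)*(p^2*q^2) + (- (\<i>*ak/e^2)*p - (\<i>*al/e^2)*q)"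
    using e by (simp add: field_simps eval_nat_numeral)
  finally have key: "((u*p - \<i>*ak)*p + (u*q - \<i>*al)*q)/e^2 - 2*(u*p - u*q)/e^3 + ((u*p - u*q)/e)^2
      = (u + u^2)*(p^2*q^2) + (- (\<i>*ak/e^2)*p - (\<i>*al/e^2)*q)" .
  have "1/(tk^2 * tl^2) = p^2*q^2" by (simp add: p_def q_def power_one_over)
  then show ?thesis
    unfolding quot e_def[symmetric] key using e by (simp add: field_simps)
qed

text \<open>The polynomial \<open>(\<i>/2)(f + f\<^sup>3)\<close> carries all terms of \<open>w + w\<^sup>2\<close>, \<open>w = f/(f - \<i>)\<close>,
  of order \<open>< 4\<close> in \<open>f\<close>.\<close>

lemma quotient_plus_square_expansion:
  fixes f :: complex
  assumes "f - \<i> \<noteq> 0"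
  shows "(f/(f - \<i>) + (f/(f - \<i>))^2)/2 = (\<i>/2) * (f + f^3) + (\<i>/2) * f^4 * (f - 2*\<i>) / (1 + \<i>*f)^2"
proof -
  have "1 + \<i>*f \<noteq> 0"
  proof
    assume "1 + \<i>*f = 0"
    then have "\<i> * (f - \<i>) = 0" by (simp add: algebra_simps)
    then show False using assms by simp
  qed
  then show ?thesis
    using assms
    by (simp add: field_simps) (simp add: algebra_simps power2_eq_square power3_eq_cube power4_eq_xxxx)
qed

lemma partial_fractions_fourth_order:
  fixes t a b c u4 :: complex
  assumes t: "t \<noteq> 0" and fi: "f - \<i> \<noteq> 0"
    and u: "u3 = c + t*u4" "u2 = b + t*u3" "u1 = a + t*u2" "f = t*u1"
  shows "(f/(f - \<i>) + (f/(f - \<i>))^2)/2 * (1/t^4)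
       = (\<i>/2)*(u4 + 3*a^2*u2 + 3*a*t*u2^2 + t^2*u2^3) + (\<i>/2)*u1^4*(f - 2*\<i>)/(1 + \<i>*f)^2
         + (\<i>/2)*(a/t^3 + b/t^2 + (c + a^3)/t)"
proof -
  have p: "f + f^3 = a*t + b*t^2 + (c + a^3)*t^3 + t^4*(u4 + 3*a^2*u2 + 3*a*t*u2^2 + t^2*u2^3)"
    using u by (simp add: algebra_simps power2_eq_square power3_eq_cube power4_eq_xxxx)
  have q: "f^4 = t^4 * u1^4" using u by (simp add: power_mult_distrib)
  have "(f/(f - \<i>) + (f/(f - \<i>))^2)/2 * (1/t^4)
        = ((\<i>/2) * (f + f^3) + (\<i>/2) * f^4 * (f - 2*\<i>) / (1 + \<i>*f)^2) / t^4"
    by (simp only: quotient_plus_square_expansion[OF fi]) simp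
  also have "\<dots> = ((\<i>/2) * (a*t + b*t^2 + (c + a^3)*t^3 + t^4*(u4 + 3*a^2*u2 + 3*a*t*u2^2 + t^2*u2^3))
        + (\<i>/2) * (t^4 * u1^4) * (f - 2*\<i>) / (1 + \<i>*f)^2) / t^4"
    by (simp only: p q)
  also have "\<dots> = (\<i>/2)*(u4 + 3*a^2*u2 + 3*a*t*u2^2 + t^2*u2^3) + (\<i>/2)*u1^4*(f - 2*\<i>)/(1 + \<i>*f)^2
         + (\<i>/2)*(a/t^3 + b/t^2 + (c + a^3)/t)"
    using t by (simp add: field_simps) (simp add: algebra_simps eval_nat_numeral)
  finally show ?thesis .
qed

section \<open>Hermite-Biehler functions\<close>

lemma hermite_biehler_holomorphic: "hermite_biehler E \<Longrightarrow> E holomorphic_on UNIV"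
  by (simp add: hermite_biehler_def)

lemma holomorphic_on_reflect: "E holomorphic_on UNIV \<Longrightarrow> (\<lambda>z. cnj (E (cnj z))) holomorphic_on UNIV"
  using holomorphic_on_compose_cnj_cnj[of E UNIV] by (simp add: o_def image_cnj_conv_vimage_cnj)

lemma holomorphic_compA: "E holomorphic_on UNIV \<Longrightarrow> compA E holomorphic_on UNIV"
  unfolding compA_def[abs_def] by (intro holomorphic_intros holomorphic_on_reflect) auto

lemma holomorphic_compB: "E holomorphic_on UNIV \<Longrightarrow> compB E holomorphic_on UNIV"
  unfolding compB_def[abs_def] by (intro holomorphic_intros holomorphic_on_reflect) auto

lemma compA_minus_compB: "compA E z - \<i> * compB E z = E z"
  by (simp add: compA_def compB_def field_simps)

lemma compA_of_real_in_Reals: "compA E (of_real x) \<in> \<real>"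
  by (simp add: compA_def complex_is_Real_iff)

lemma compB_of_real_in_Reals: "compB E (of_real x) \<in> \<real>"
  by (simp add: compB_def complex_is_Real_iff)

lemma cnj_compA_of_real: "cnj (compA E (of_real x)) = compA E (of_real x)"
  using compA_of_real_in_Reals Reals_cnj_iff by blast

lemma add_cnj_eq_compA: "E (of_real x) + cnj (E (of_real x)) = 2 * compA E (of_real x)"
  by (simp add: compA_def)

lemma hermite_biehler_reflect_le:
  assumes "hermite_biehler E" "0 \<le> Im z"
  shows "norm (E (cnj z)) \<le> norm (E z)"
proof (cases "Im z = 0")
  case True
  then have "cnj z = z" by (simp add: complex_eq_iff)
  then show ?thesis by simp
qed (use assms in \<open>auto simp: hermite_biehler_def intro: less_imp_le\<close>)

lemma hermite_biehler_nonzero: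
  assumes HB: "hermite_biehler E" and noreal: "\<forall>x::real. E (of_real x) \<noteq> 0" and z: "0 \<le> Im z"
  shows "E z \<noteq> 0"
proof (cases "Im z = 0")
  case True
  then have "z = of_real (Re z)" by (simp add: complex_eq_iff)
  then show ?thesis using noreal by metis
next
  case False
  then have "norm (E (cnj z)) < norm (E z)" using HB z unfolding hermite_biehler_def by auto
  then show ?thesis by auto
qed

lemma norm_compA_le:
  assumes "hermite_biehler E" "0 \<le> Im z"
  shows "norm (compA E z) \<le> norm (E z)"
proof -
  have "norm (E z + cnj (E (cnj z))) \<le> norm (E z) + norm (E (cnj z))"
    using norm_triangle_ineq[of "E z" "cnj (E (cnj z))"] by simp
  then show ?thesis
    using hermite_biehler_reflect_le[OF assms] by (simp add: compA_def)
qed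

definition hb_weight :: "(complex \<Rightarrow> complex) \<Rightarrow> complex \<Rightarrow> complex" where
  "hb_weight E z = (compA E z / E z + (compA E z / E z)^2) / 2"

lemma norm_hb_weight_le_1:
  assumes "hermite_biehler E" "0 \<le> Im z"
  shows "norm (hb_weight E z) \<le> 1"
proof -
  have n: "norm (compA E z / E z) \<le> 1"
    using norm_compA_le[OF assms] by (cases "E z = 0") (auto simp: norm_divide field_simps)
  have "norm (compA E z / E z + (compA E z / E z)^2) \<le> norm (compA E z / E z) + norm (compA E z / E z)^2"
    by (metis norm_power norm_triangle_ineq)
  also have "\<dots> \<le> 1 + 1" using n by (intro add_mono) (auto simp: power_le_one)
  finally show ?thesis by (simp add: hb_weight_def)
qed

lemma real_part_hb_weight:
  assumes "E (of_real x) \<noteq> 0"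
  shows "(hb_weight E (of_real x) + cnj (hb_weight E (of_real x))) / 2
         = compA E (of_real x)^4 / complex_of_real (norm (E (of_real x))^4)"
proof -
  have "complex_of_real (norm (E (of_real x))^4) = (E (of_real x) * cnj (E (of_real x)))^2"
    by (simp flip: complex_norm_square)
  then show ?thesis
    unfolding hb_weight_def
    using real_part_quotient_plus_square[OF assms cnj_compA_of_real[of E x] add_cnj_eq_compA[of E x]] by simp
qed

lemma hb_weight_eq_ratio:
  assumes "compB E z \<noteq> 0" "E z \<noteq> 0"
  defines "f \<equiv> compA E z / compB E z"
  shows "hb_weight E z = (f/(f - \<i>) + (f/(f - \<i>))^2)/2" and "f - \<i> \<noteq> 0"
proof -
  have "compB E z * (f - \<i>) = compA E z - \<i> * compB E z"
    using assms(1) by (simp add: f_def right_diff_distrib mult.commute)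
  then have E: "E z = compB E z * (f - \<i>)"
    by (simp add: compA_minus_compB)
  then show "f - \<i> \<noteq> 0" using assms(2) by auto
  then have "compA E z / E z = f / (f - \<i>)"
    unfolding E using assms(1) by (simp add: f_def)
  then show "hb_weight E z = (f/(f - \<i>) + (f/(f - \<i>))^2)/2"
    by (simp add: hb_weight_def)
qed

text \<open>A neighbourhood of the closed upper half-plane on which \<open>E\<close> does not vanish and which
  avoids the pole \<open>-\<i>\<close> of the correction term \<open>\<i> c / (z + \<i>)\<close>.\<close>

definition hb_domain :: "(complex \<Rightarrow> complex) \<Rightarrow> complex set" where
  "hb_domain E = {z. E z \<noteq> 0 \<and> -1 < Im z}"

lemma
  assumes HB: "hermite_biehler E" and noreal: "\<forall>x::real. E (of_real x) \<noteq> 0"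
  shows open_hb_domain: "open (hb_domain E)"
    and closed_upper_half_plane_subset_hb_domain: "{z. 0 \<le> Im z} \<subseteq> hb_domain E"
proof -
  have "continuous_on UNIV E"
    using hermite_biehler_holomorphic[OF HB] holomorphic_on_imp_continuous_on by blast
  then have "open {z. E z \<noteq> 0}"
    by (rule open_Collect_neq[OF _ continuous_on_const])
  then show "open (hb_domain E)"
    unfolding hb_domain_def Collect_conj_eq by (intro open_Int open_halfspace_Im_gt)
  show "{z. 0 \<le> Im z} \<subseteq> hb_domain E"
    using hermite_biehler_nonzero[OF HB noreal] by (auto simp: hb_domain_def)
qed

lemma hb_domain_add_i_nonzero: "z \<in> hb_domain E \<Longrightarrow> z + \<i> \<noteq> 0"
  by (auto simp: hb_domain_def complex_eq_iff)

text \<open>The contour argument behind all four formulas; \<open>Pp\<close> is the principal part of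
  \<open>hb_weight E / D\<close> at the real roots of \<open>D\<close>.\<close>

lemma integral_by_principal_part:
  assumes HB: "hermite_biehler E" and noreal: "\<forall>x::real. E (of_real x) \<noteq> 0"
    and holo: "H holomorphic_on hb_domain E" and S: "finite S"
    and H_eq: "\<And>z. 0 \<le> Im z \<Longrightarrow> z \<notin> of_real ` S \<Longrightarrow>
                 H z = hb_weight E z * (1 / D z) + (Pp z + \<i> * c / (z + \<i>))"
    and decay_D: "decays_quadratically (\<lambda>z. 1 / D z)"
    and decay_Pp: "decays_quadratically (\<lambda>z. Pp z + \<i> * c / (z + \<i>))"
    and D_real: "\<And>x. x \<notin> S \<Longrightarrow> cnj (D (of_real x)) = D (of_real x)"
    and Pp_imag: "\<And>x. x \<notin> S \<Longrightarrow> cnj (Pp (of_real x)) = - Pp (of_real x)"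
    and c: "cnj c = c"
    and F: "F \<in> borel_measurable lborel"
    and FD: "\<And>x. x \<notin> S \<Longrightarrow>
               F x = compA E (of_real x)^4 / (D (of_real x) * complex_of_real (norm (E (of_real x))^4))"
  shows "integral\<^sup>L lborel F = - c * pi"
proof (rule integral_eq_of_decaying_real_part[OF open_hb_domain[OF HB noreal]
      closed_upper_half_plane_subset_hb_domain[OF HB noreal] holo _ F S])
  show "decays_quadratically H"
  proof (rule decays_quadratically_cong)
    show "decays_quadratically (\<lambda>z. hb_weight E z * (1 / D z) + (Pp z + \<i> * c / (z + \<i>)))"
      using norm_hb_weight_le_1[OF HB]
      by (intro decays_quadratically_add decays_quadratically_mult_bounded decay_D decay_Pp)
    show "\<forall>\<^sub>F z in at_infinity. 0 \<le> Im z \<longrightarrow>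
            H z = hb_weight E z * (1 / D z) + (Pp z + \<i> * c / (z + \<i>))"
      using eventually_at_infinity_not_in[of "of_real ` S"] S by (auto elim: eventually_mono simp: H_eq)
  qed
  fix x assume x: "x \<notin> S"
  have hx: "H (of_real x) = hb_weight E (of_real x) * (1 / D (of_real x))
                          + (Pp (of_real x) + \<i> * c / (of_real x + \<i>))"
    using x by (intro H_eq) auto
  let ?W = "hb_weight E (of_real x)" and ?D = "D (of_real x)" and ?P = "Pp (of_real x)"
  have "(H (of_real x) + cnj (H (of_real x))) / 2
        = (?W + cnj ?W) / 2 / ?D + (?P + cnj ?P) / 2
          + (\<i> * c / (of_real x + \<i>) + cnj (\<i> * c / (of_real x + \<i>))) / 2"
    unfolding hx by (rule real_part_weight_sum[OF D_real[OF x]])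
  also have "\<dots> = F x + c * of_real (inverse (1 + x^2))"
    using real_part_hb_weight[of E x] noreal Pp_imag[OF x] real_part_i_div_add_i[OF c] FD[OF x]
    by simp
  finally show "F x = (H (of_real x) + cnj (H (of_real x))) / 2 - c * of_real (inverse (1 + x^2))"
    by (simp only: add_diff_cancel)
qed

section \<open>The four integrals\<close>

lemma norm_E2_square:
  "complex_of_real (norm_E2 E P ^ 2) =
     integral\<^sup>L lborel (\<lambda>x::real. complex_of_real (norm (P (of_real x))^2 / norm (E (of_real x))^4))"
proof -
  have "0 \<le> integral\<^sup>L lborel (\<lambda>x::real. norm (P (of_real x))^2 / norm (E (of_real x))^4)"
    by (intro integral_nonneg_AE AE_I2) auto
  then show ?thesis
    unfolding norm_E2_def by (simp only: real_sqrt_pow2 integral_complex_of_real)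
qed

lemma continuous_on_real_line: "P holomorphic_on UNIV \<Longrightarrow> continuous_on UNIV (\<lambda>x::real. P (of_real x))"
  by (rule continuous_on_compose2[OF holomorphic_on_imp_continuous_on]) (auto intro: continuous_intros)

text \<open>\<open>zero_quotient E s z = A(z) / ((z - s) E(z))\<close> when \<open>A(s) = 0\<close>.\<close>

definition zero_quotient :: "(complex \<Rightarrow> complex) \<Rightarrow> real \<Rightarrow> complex \<Rightarrow> complex" where
  "zero_quotient E s z = divided_diff (compA E) (of_real s) z / E z"

context
  fixes E :: "complex \<Rightarrow> complex"
  assumes HB: "hermite_biehler E" and noreal: "\<forall>x::real. E (of_real x) \<noteq> 0"
begin

lemma E_at_zero_of_compA:
  assumes "compA E (of_real s) = 0"
  shows "E (of_real s) = - \<i> * compB E (of_real s)" "compB E (of_real s) \<noteq> 0"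
  using compA_minus_compB[of E "of_real s"] assms noreal by auto

lemma deriv_compA_over_compB_real:
  assumes "compA E (of_real s) = 0"
  shows "cnj (deriv (compA E) (of_real s) / compB E (of_real s))
         = deriv (compA E) (of_real s) / compB E (of_real s)"
proof -
  have "compA E field_differentiable at (of_real s)"
    using holomorphic_compA[OF hermite_biehler_holomorphic[OF HB]]
    by (rule holomorphic_on_imp_differentiable_at) auto
  then have "deriv (compA E) (of_real s) \<in> \<real>"
    by (rule deriv_of_real_in_Reals[of "compA E" s, OF _ compA_of_real_in_Reals])
  then show ?thesis
    using compB_of_real_in_Reals Reals_cnj_iff by (metis Reals_divide)
qed

lemma holomorphic_zero_quotient: "zero_quotient E s holomorphic_on hb_domain E"
proof -
  have "E holomorphic_on hb_domain E" "compA E holomorphic_on hb_domain E"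
    using hermite_biehler_holomorphic[OF HB] holomorphic_compA holomorphic_on_subset by blast+
  then show ?thesis
    unfolding zero_quotient_def[abs_def] using open_hb_domain[OF HB noreal]
    by (intro holomorphic_intros holomorphic_on_divided_diff) (auto simp: hb_domain_def)
qed

lemma zero_quotient_other:
  assumes "compA E (of_real s) = 0" "z \<noteq> of_real s"
  shows "zero_quotient E s z = compA E z / E z / (z - of_real s)"
  using assms by (simp add: zero_quotient_def divided_diff_other)

lemma zero_quotient_same:
  assumes "compA E (of_real s) = 0"
  shows "zero_quotient E s (of_real s) = \<i> * (deriv (compA E) (of_real s) / compB E (of_real s))"
  using E_at_zero_of_compA[OF assms] by (simp add: zero_quotient_def field_simps)

lemma Qfun_eq:
  "compA E (of_real s) = 0 \<Longrightarrow> Qfun E s = (\<lambda>z. compA E z * divided_diff (compA E) (of_real s) z)"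
  by (auto simp: Qfun_def divided_diff_def power2_eq_square)

lemma Pfun_eq:
  "compA E (of_real s) = 0 \<Longrightarrow> Pfun E s = (\<lambda>z. (divided_diff (compA E) (of_real s) z)^2)"
  by (auto simp: Pfun_def divided_diff_def power_divide)

lemma holomorphic_Qfun: "compA E (of_real s) = 0 \<Longrightarrow> Qfun E s holomorphic_on UNIV"
  unfolding Qfun_eq using holomorphic_compA[OF hermite_biehler_holomorphic[OF HB]]
  by (intro holomorphic_intros holomorphic_on_divided_diff) auto

lemma holomorphic_Pfun: "compA E (of_real s) = 0 \<Longrightarrow> Pfun E s holomorphic_on UNIV"
  unfolding Pfun_eq using holomorphic_compA[OF hermite_biehler_holomorphic[OF HB]]
  by (intro holomorphic_intros holomorphic_on_divided_diff) auto

lemma borel_measurable_inner_E2_integrand: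
  assumes "P holomorphic_on UNIV" "Q holomorphic_on UNIV"
  shows "(\<lambda>x::real. P (of_real x) * cnj (Q (of_real x)) / complex_of_real (norm (E (of_real x))^4))
          \<in> borel_measurable lborel"
proof -
  have "continuous_on UNIV
    (\<lambda>x::real. P (of_real x) * cnj (Q (of_real x)) / complex_of_real (norm (E (of_real x))^4))"
    using noreal hermite_biehler_holomorphic[OF HB] assms
    by (intro continuous_intros continuous_on_real_line) auto
  then show ?thesis using borel_measurable_continuous_onI by simp
qed

lemma borel_measurable_norm_E2_integrand:
  assumes "P holomorphic_on UNIV"
  shows "(\<lambda>x::real. complex_of_real (norm (P (of_real x))^2 / norm (E (of_real x))^4))
          \<in> borel_measurable lborel"
proof -
  have "continuous_on UNIV
    (\<lambda>x::real. complex_of_real (norm (P (of_real x))^2 / norm (E (of_real x))^4))"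
    using noreal hermite_biehler_holomorphic[OF HB] assms
    by (intro continuous_intros continuous_on_real_line) auto
  then show ?thesis using borel_measurable_continuous_onI by simp
qed

lemma inner_E2_Qfun_Qfun:
  assumes zk: "compA E (of_real sk) = 0" and zl: "compA E (of_real sl) = 0" and ne: "sk \<noteq> sl"
  shows "inner_E2 E (Qfun E sk) (Qfun E sl) = 0"
proof -
  define D :: "complex \<Rightarrow> complex" where "D = (\<lambda>z. (z - of_real sk)^1 * (z - of_real sl)^1)"
  define H where "H = (\<lambda>z. ((zero_quotient E sk z - zero_quotient E sl z) / (of_real sk - of_real sl)
                           + zero_quotient E sk z * zero_quotient E sl z) / 2)"
  have "integral\<^sup>L lborel (\<lambda>x. Qfun E sk (of_real x) * cnj (Qfun E sl (of_real x))
                               / complex_of_real (norm (E (of_real x))^4)) = - 0 * complex_of_real pi"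
  proof (rule integral_by_principal_part[OF HB noreal, where S="{sk, sl}" and D=D and Pp="\<lambda>_. 0"])
    show "H holomorphic_on hb_domain E"
      unfolding H_def using ne by (intro holomorphic_intros holomorphic_zero_quotient) auto
    show "H z = hb_weight E z * (1 / D z) + (0 + \<i> * 0 / (z + \<i>))"
      if "z \<notin> of_real ` {sk, sl}" for z
    proof -
      have z: "z \<noteq> of_real sk" "z \<noteq> of_real sl" using that by auto
      define u where "u = compA E z / E z"
      have "H z = ((u/(z - of_real sk) - u/(z - of_real sl))/((z - of_real sl) - (z - of_real sk))
                   + (u/(z - of_real sk))*(u/(z - of_real sl)))/2"
        unfolding H_def u_def zero_quotient_other[OF zk z(1)]
          zero_quotient_other[OF zl z(2)] by simp
      also have "\<dots> = (u + u^2)/2 * (1 / D z)"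
        unfolding D_def using z ne by (intro partial_fractions_two_simple_poles) auto
      finally show ?thesis by (simp add: hb_weight_def u_def)
    qed
    show "decays_quadratically (\<lambda>z. 1 / D z)"
      unfolding D_def by (rule decays_quadratically_inverse_powers) simp
    show "(\<lambda>x. Qfun E sk (of_real x) * cnj (Qfun E sl (of_real x))
              / complex_of_real (norm (E (of_real x))^4)) \<in> borel_measurable lborel"
      using holomorphic_Qfun[OF zk] holomorphic_Qfun[OF zl]
      by (rule borel_measurable_inner_E2_integrand)
    show "Qfun E sk (of_real x) * cnj (Qfun E sl (of_real x)) / complex_of_real (norm (E (of_real x))^4)
          = compA E (of_real x)^4 / (D (of_real x) * complex_of_real (norm (E (of_real x))^4))"
      if "x \<notin> {sk, sl}" for x
      using that by (simp add: Qfun_def D_def cnj_compA_of_real power4_eq_xxxx power2_eq_square mult_ac)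
  qed (auto simp: D_def decays_quadratically_0)
  then show ?thesis
    unfolding inner_E2_def by simp
qed

lemma norm_E2_Qfun:
  assumes zs: "compA E (of_real s) = 0"
  shows "complex_of_real (norm_E2 E (Qfun E s) ^ 2)
         = - (of_real pi / 2) * (deriv (compA E) (of_real s) / compB E (of_real s))"
proof -
  define a where "a = deriv (compA E) (of_real s) / compB E (of_real s)"
  define v where "v = zero_quotient E s"
  define H where "H = (\<lambda>z. divided_diff v (of_real s) z / 2 + (v z)^2 / 2 + \<i> * (a/2) / (z + \<i>))"
  define Pp :: "complex \<Rightarrow> complex" where "Pp = (\<lambda>z. - (\<i> * a / 2) / (z - of_real s))"
  have a_real: "cnj a = a"
    unfolding a_def by (rule deriv_compA_over_compB_real[OF zs])
  have "integral\<^sup>L lborel (\<lambda>x. complex_of_real (norm (Qfun E s (of_real x))^2 / norm (E (of_real x))^4))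
        = - (a/2) * complex_of_real pi"
  proof (rule integral_by_principal_part[OF HB noreal, where S="{s}" and D="\<lambda>z. (z - of_real s)^2" and Pp=Pp])
    show "H holomorphic_on hb_domain E"
      unfolding H_def v_def using open_hb_domain[OF HB noreal] hb_domain_add_i_nonzero
      by (intro holomorphic_intros holomorphic_on_divided_diff holomorphic_zero_quotient) auto
    show "H z = hb_weight E z * (1 / (z - of_real s)^2) + (Pp z + \<i> * (a/2) / (z + \<i>))"
      if "z \<notin> of_real ` {s}" for z
    proof -
      have z: "z \<noteq> of_real s" using that by auto
      define u where "u = compA E z / E z"
      have "H z = ((u/(z - of_real s) - \<i>*a)/(z - of_real s))/2 + (u/(z - of_real s))^2/2 + \<i>*(a/2)/(z + \<i>)"
        unfolding H_def divided_diff_other[OF z] v_def zero_quotient_same[OF zs]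
          zero_quotient_other[OF zs z] u_def a_def ..
      also have "\<dots> = (u + u^2)/2 * (1/(z - of_real s)^2) + (Pp z + \<i> * (a/2) / (z + \<i>))"
        unfolding Pp_def using z by (intro partial_fractions_double_pole) auto
      finally show ?thesis by (simp add: hb_weight_def u_def)
    qed
    show "decays_quadratically (\<lambda>z. 1 / (z - of_real s)^2)"
      using decays_quadratically_inverse_powers[of 2 0 1 "of_real s" "of_real s"] by simp
    show "decays_quadratically (\<lambda>z. Pp z + \<i> * (a/2) / (z + \<i>))"
      using decays_quadratically_inverse_diff[of "- (\<i> * a / 2)" "of_real s" "- \<i>"] by (simp add: Pp_def)
    show "(\<lambda>x. complex_of_real (norm (Qfun E s (of_real x))^2 / norm (E (of_real x))^4))
          \<in> borel_measurable lborel"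
      by (rule borel_measurable_norm_E2_integrand[OF holomorphic_Qfun[OF zs]])
    show "complex_of_real (norm (Qfun E s (of_real x))^2 / norm (E (of_real x))^4)
          = compA E (of_real x)^4 / ((of_real x - of_real s)^2 * complex_of_real (norm (E (of_real x))^4))"
      if "x \<notin> {s}" for x
      unfolding complex_of_real_norm_square_div using that
      by (simp add: Qfun_def cnj_compA_of_real power4_eq_xxxx power2_eq_square mult_ac)
  qed (use a_real in \<open>auto simp: Pp_def\<close>)
  then show ?thesis
    unfolding norm_E2_square a_def by (simp add: mult_ac)
qed

lemma inner_E2_Pfun_Pfun:
  assumes zk: "compA E (of_real sk) = 0" and zl: "compA E (of_real sl) = 0" and ne: "sk \<noteq> sl"
  shows "inner_E2 E (Pfun E sk) (Pfun E sl) =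
           - (deriv (compA E) (of_real sk) / compB E (of_real sk)
              + deriv (compA E) (of_real sl) / compB E (of_real sl))
             * of_real pi / (2 * (of_real sk - of_real sl)^2)"
proof -
  define ak where "ak = deriv (compA E) (of_real sk) / compB E (of_real sk)"
  define al where "al = deriv (compA E) (of_real sl) / compB E (of_real sl)"
  define d :: complex where "d = of_real sk - of_real sl"
  define c where "c = (ak + al) / (2 * d^2)"
  define vk vl where "vk = zero_quotient E sk" and "vl = zero_quotient E sl"
  define H where "H = (\<lambda>z. ((divided_diff vk (of_real sk) z + divided_diff vl (of_real sl) z) / d^2
                             - 2 * (vk z - vl z) / d^3 + ((vk z - vl z) / d)^2) / 2
                           + \<i> * c / (z + \<i>))"
  define Pp :: "complex \<Rightarrow> complex"
    where "Pp = (\<lambda>z. - (\<i>*ak/(2*d^2))/(z - of_real sk) - (\<i>*al/(2*d^2))/(z - of_real sl))"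
  define D :: "complex \<Rightarrow> complex" where "D = (\<lambda>z. (z - of_real sk)^2 * (z - of_real sl)^2)"
  have d: "d \<noteq> 0" using ne by (simp add: d_def)
  have real: "cnj ak = ak" "cnj al = al"
    unfolding ak_def al_def by (rule deriv_compA_over_compB_real[OF zk],
                                rule deriv_compA_over_compB_real[OF zl])
  have "integral\<^sup>L lborel (\<lambda>x. Pfun E sk (of_real x) * cnj (Pfun E sl (of_real x))
                               / complex_of_real (norm (E (of_real x))^4)) = - c * complex_of_real pi"
  proof (rule integral_by_principal_part[OF HB noreal, where S="{sk, sl}" and D=D and Pp=Pp])
    show "H holomorphic_on hb_domain E"
      unfolding H_def vk_def vl_def using open_hb_domain[OF HB noreal] hb_domain_add_i_nonzero d
      by (intro holomorphic_intros holomorphic_on_divided_diff holomorphic_zero_quotient) auto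
    show "H z = hb_weight E z * (1 / D z) + (Pp z + \<i> * c / (z + \<i>))"
      if "z \<notin> of_real ` {sk, sl}" for z
    proof -
      have z: "z \<noteq> of_real sk" "z \<noteq> of_real sl" using that by auto
      have dz: "d = (z - of_real sl) - (z - of_real sk)" by (simp add: d_def)
      define u where "u = compA E z / E z"
      have "H z - \<i> * c / (z + \<i>)
          = ((((u/(z - of_real sk)) - \<i>*ak)/(z - of_real sk) + ((u/(z - of_real sl)) - \<i>*al)/(z - of_real sl))
               /((z - of_real sl) - (z - of_real sk))^2
             - 2*((u/(z - of_real sk)) - (u/(z - of_real sl)))/((z - of_real sl) - (z - of_real sk))^3
             + ((u/(z - of_real sk) - u/(z - of_real sl))/((z - of_real sl) - (z - of_real sk)))^2)/2"
        unfolding H_def divided_diff_other[OF z(1)] divided_diff_other[OF z(2)] vk_def vl_def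
          zero_quotient_same[OF zk] zero_quotient_same[OF zl]
          zero_quotient_other[OF zk z(1)] zero_quotient_other[OF zl z(2)]
          u_def ak_def al_def dz[symmetric] by simp
      also have "\<dots> = (u + u^2)/2 * (1 / D z) + Pp z"
        unfolding D_def Pp_def dz using z d dz by (intro partial_fractions_two_double_poles) auto
      finally show ?thesis by (simp add: hb_weight_def u_def diff_eq_eq add.assoc)
    qed
    show "decays_quadratically (\<lambda>z. 1 / D z)"
      unfolding D_def by (rule decays_quadratically_inverse_powers) simp
    have principal_part: "(\<lambda>z. Pp z + \<i> * c / (z + \<i>))
          = (\<lambda>z. (- (\<i>*ak/(2*d^2))/(z - of_real sk) - - (\<i>*ak/(2*d^2))/(z - - \<i>))
               + (- (\<i>*al/(2*d^2))/(z - of_real sl) - - (\<i>*al/(2*d^2))/(z - - \<i>)))"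
      by (simp add: Pp_def c_def add_divide_distrib ring_distribs algebra_simps)
    show "decays_quadratically (\<lambda>z. Pp z + \<i> * c / (z + \<i>))"
      unfolding principal_part by (intro decays_quadratically_add decays_quadratically_inverse_diff)
    show "(\<lambda>x. Pfun E sk (of_real x) * cnj (Pfun E sl (of_real x))
              / complex_of_real (norm (E (of_real x))^4)) \<in> borel_measurable lborel"
      using holomorphic_Pfun[OF zk] holomorphic_Pfun[OF zl]
      by (rule borel_measurable_inner_E2_integrand)
    show "Pfun E sk (of_real x) * cnj (Pfun E sl (of_real x)) / complex_of_real (norm (E (of_real x))^4)
          = compA E (of_real x)^4 / (D (of_real x) * complex_of_real (norm (E (of_real x))^4))"
      if "x \<notin> {sk, sl}" for x
      using that by (simp add: Pfun_def D_def cnj_compA_of_real power4_eq_xxxx power2_eq_square mult_ac)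
  qed (use real in \<open>auto simp: D_def Pp_def c_def d_def\<close>)
  then show ?thesis
    using d unfolding inner_E2_def c_def ak_def al_def d_def by (simp add: field_simps)
qed

lemma norm_E2_Pfun:
  assumes zs: "compA E (of_real s) = 0"
  shows "complex_of_real (norm_E2 E (Pfun E s) ^ 2) =
           - (of_real pi / 2) *
             ((deriv (compA E) (of_real s) / compB E (of_real s))^3
              + (1/6) * (deriv ^^ 3) (\<lambda>z. compA E z / compB E z) (of_real s))"
proof -
  define s' :: complex where "s' = of_real s"
  define V where "V = {z. compB E z \<noteq> 0}"
  define f where "f = (\<lambda>z. compA E z / compB E z)"
  define u1 where "u1 = divided_diff f s'"
  define u2 where "u2 = divided_diff u1 s'"
  define u3 where "u3 = divided_diff u2 s'"
  define u4 where "u4 = divided_diff u3 s'"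
  define a b c3 where "a = u1 s'" and "b = u2 s'" and "c3 = u3 s'"
  define c where "c = (c3 + a^3) / 2"
  define Pt where "Pt = (\<lambda>z. (\<i>/2) * (a/(z - s')^3 + b/(z - s')^2 + (c3 + a^3)/(z - s')))"
  \<comment> \<open>\<open>u1, \<dots>, u4\<close> are the successive Taylor remainders of \<open>f\<close> at \<open>s\<close>; \<open>rho\<close> is the part of
    \<open>H0\<close> that is regular at \<open>s\<close>, as computed in \<open>partial_fractions_fourth_order\<close>.\<close>
  define rho where "rho = (\<lambda>z. (\<i>/2)*(u4 z + 3*a^2*u2 z + 3*a*(z - s')*(u2 z)^2 + (z - s')^2*(u2 z)^3)
                                + (\<i>/2)*(u1 z)^4*(f z - 2*\<i>)/(1 + \<i>*f z)^2 + \<i> * c / (z + \<i>))"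
  define H0 where "H0 = (\<lambda>z. hb_weight E z * (1 / (z - s')^4) + (- Pt z + \<i> * c / (z + \<i>)))"
  have hol_E: "E holomorphic_on UNIV" by (rule hermite_biehler_holomorphic[OF HB])
  note hol_A = holomorphic_compA[OF hol_E] and hol_B = holomorphic_compB[OF hol_E]
  have V: "open V" "s' \<in> V"
    unfolding V_def s'_def using E_at_zero_of_compA(2)[OF zs]
    by (auto intro!: open_Collect_neq holomorphic_on_imp_continuous_on hol_B)
  have hol_f: "f holomorphic_on V"
    unfolding f_def V_def using hol_A hol_B by (auto intro!: holomorphic_intros elim: holomorphic_on_subset)
  have hol_u: "u1 holomorphic_on V" "u2 holomorphic_on V" "u3 holomorphic_on V" "u4 holomorphic_on V"
    unfolding u1_def u2_def u3_def u4_def using hol_f V(1) by (auto intro!: holomorphic_on_divided_diff)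
  have fs: "f s' = 0" unfolding f_def s'_def using zs by simp
  have expansion: "f z = (z - s') * u1 z" "u1 z = a + (z - s') * u2 z"
    "u2 z = b + (z - s') * u3 z" "u3 z = c3 + (z - s') * u4 z" for z
    unfolding a_def b_def c3_def u2_def u3_def u4_def
      by (metis add_0 divided_diff_expansion fs u1_def) (rule divided_diff_expansion)+
  have diff: "g field_differentiable at (of_real s)" if "g holomorphic_on V" for g
    using holomorphic_on_imp_differentiable_at[OF that] V unfolding s'_def by blast
  have "f (of_real x) \<in> \<real>" for x
    unfolding f_def using compA_of_real_in_Reals compB_of_real_in_Reals by (rule Reals_divide)
  then have u1: "u1 (of_real x) \<in> \<real>" for x
    unfolding u1_def s'_def by (rule divided_diff_of_real_in_Reals[OF diff[OF hol_f]])
  then have u2: "u2 (of_real x) \<in> \<real>" for x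
    unfolding u2_def s'_def by (rule divided_diff_of_real_in_Reals[OF diff[OF hol_u(1)]])
  then have u3: "u3 (of_real x) \<in> \<real>" for x
    unfolding u3_def s'_def by (rule divided_diff_of_real_in_Reals[OF diff[OF hol_u(2)]])
  have real: "cnj a = a" "cnj b = b" "cnj c3 = c3"
    unfolding a_def b_def c3_def s'_def using u1 u2 u3 Reals_cnj_iff by blast+
  have a_eq: "a = deriv (compA E) s' / compB E s'"
    unfolding a_def u1_def divided_diff_same f_def
    using diff[OF hol_A[THEN holomorphic_on_subset]] diff[OF hol_B[THEN holomorphic_on_subset]] zs V(2)
    by (intro deriv_divide_at_zero) (auto simp: s'_def V_def)
  have c3_eq: "(deriv ^^ 3) f s' = 6 * c3"
    unfolding c3_def u3_def u2_def u1_def by (rule third_deriv_eq_divided_diff[OF V hol_f fs])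
  have "integral\<^sup>L lborel (\<lambda>x. complex_of_real (norm (Pfun E s (of_real x))^2 / norm (E (of_real x))^4))
        = - c * complex_of_real pi"
  proof (rule integral_by_principal_part[OF HB noreal, where S="{s}" and D="\<lambda>z. (z - s')^4"
        and Pp="\<lambda>z. - Pt z" and H="\<lambda>z. if z = s' then rho s' else H0 z"])
    show "(\<lambda>z. if z = s' then rho s' else H0 z) holomorphic_on hb_domain E"
    proof (rule holomorphic_on_remove_singularity[where V="V \<inter> hb_domain E"])
      show "H0 holomorphic_on hb_domain E - {s'}"
        unfolding H0_def Pt_def hb_weight_def using hb_domain_add_i_nonzero hol_A hol_E
        by (intro holomorphic_intros) (auto simp: hb_domain_def elim: holomorphic_on_subset)
      show "open (V \<inter> hb_domain E)" "s' \<in> V \<inter> hb_domain E"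
        using V open_hb_domain[OF HB noreal] closed_upper_half_plane_subset_hb_domain[OF HB noreal]
        by (auto simp: s'_def)
      have "isCont g s'" if "g holomorphic_on V" for g
        using that V holomorphic_on_imp_continuous_on continuous_on_eq_continuous_at by blast
      then show "isCont rho s'"
        unfolding rho_def using hol_f hol_u fs hb_domain_add_i_nonzero \<open>s' \<in> V \<inter> hb_domain E\<close>
        by (auto intro!: continuous_intros)
      show "H0 z = rho z" if "z \<in> V \<inter> hb_domain E" "z \<noteq> s'" for z
      proof -
        have B: "compB E z \<noteq> 0" and E: "E z \<noteq> 0"
          using that by (auto simp: V_def hb_domain_def)
        have fz: "f z = compA E z / compB E z" by (simp add: f_def)
        have "hb_weight E z * (1 / (z - s')^4) = rho z - \<i> * c / (z + \<i>) + Pt z"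
          unfolding hb_weight_eq_ratio(1)[OF B E] fz[symmetric]
          using partial_fractions_fourth_order[OF _ hb_weight_eq_ratio(2)[OF B E, folded fz]
              expansion(4,3,2,1)[of z]] that
          by (simp add: rho_def Pt_def c_def)
        then show ?thesis by (simp add: H0_def)
      qed
    qed (rule open_hb_domain[OF HB noreal])
    show "(if z = s' then rho s' else H0 z) = hb_weight E z * (1 / (z - s')^4) + (- Pt z + \<i> * c / (z + \<i>))"
      if "z \<notin> of_real ` {s}" for z
      using that by (simp add: H0_def s'_def)
    show "decays_quadratically (\<lambda>z. 1 / (z - s')^4)"
      using decays_quadratically_inverse_powers[of 4 0 1 s' s'] by simp
    have principal_part: "(\<lambda>z. - Pt z + \<i> * c / (z + \<i>))
          = (\<lambda>z. (- (\<i>/2) * a) / ((z - s')^3 * (z - s')^0) + ((- (\<i>/2) * b) / ((z - s')^2 * (z - s')^0)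
               + (- (\<i> * c) / (z - s') - - (\<i> * c) / (z - - \<i>))))"
      by (simp add: Pt_def c_def add_divide_distrib diff_divide_distrib ring_distribs algebra_simps)
    show "decays_quadratically (\<lambda>z. - Pt z + \<i> * c / (z + \<i>))"
      unfolding principal_part
      by (intro decays_quadratically_add decays_quadratically_inverse_diff
          decays_quadratically_inverse_powers) simp_all
    show "(\<lambda>x. complex_of_real (norm (Pfun E s (of_real x))^2 / norm (E (of_real x))^4))
          \<in> borel_measurable lborel"
      by (rule borel_measurable_norm_E2_integrand[OF holomorphic_Pfun[OF zs]])
    show "complex_of_real (norm (Pfun E s (of_real x))^2 / norm (E (of_real x))^4)
          = compA E (of_real x)^4 / ((of_real x - s')^4 * complex_of_real (norm (E (of_real x))^4))"
      if "x \<notin> {s}" for x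
      unfolding complex_of_real_norm_square_div using that
      by (simp add: Pfun_def s'_def cnj_compA_of_real power4_eq_xxxx power2_eq_square mult_ac)
  qed (use real in \<open>auto simp: Pt_def c_def s'_def\<close>)
  then show ?thesis
    unfolding norm_E2_square c_def
    using a_eq c3_eq by (simp add: f_def s'_def field_simps)
qed

end

theorem lemma3:
  fixes E :: "complex \<Rightarrow> complex" and sk sl :: real
  assumes HB: "hermite_biehler E"
    and noreal: "\<forall>x::real. E (of_real x) \<noteq> 0"
    and notin: "\<not> in_H_E2 E (\<lambda>z. compA E z * compB E z)"
    and zk: "compA E (of_real sk) = 0"
    and zl: "compA E (of_real sl) = 0"
  shows "(sk \<noteq> sl \<longrightarrow>
            inner_E2 E (Pfun E sk) (Pfun E sl) =
              - (deriv (compA E) (of_real sk) / compB E (of_real sk)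
                 + deriv (compA E) (of_real sl) / compB E (of_real sl))
                * of_real pi / (2 * (of_real sk - of_real sl)^2)
          \<and> inner_E2 E (Qfun E sk) (Qfun E sl) = 0)
       \<and> complex_of_real ((norm_E2 E (Pfun E sk))^2) =
            - (of_real pi / 2) *
              ((deriv (compA E) (of_real sk) / compB E (of_real sk))^3
               + (1/6) * (deriv ^^ 3) (\<lambda>z. compA E z / compB E z) (of_real sk))
       \<and> complex_of_real ((norm_E2 E (Qfun E sk))^2) =
            - (of_real pi / 2) * (deriv (compA E) (of_real sk) / compB E (of_real sk))"
  using inner_E2_Pfun_Pfun[OF HB noreal zk zl] inner_E2_Qfun_Qfun[OF HB noreal zk zl]
    norm_E2_Pfun[OF HB noreal zk] norm_E2_Qfun[OF HB noreal zk]
  by blast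

end
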